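(* Let $m,g\geq3$ be odd integers, $n=mg$ and $k=1+(m-1)g$, and let $A$ be a cyclically $k$-diagonal $n\times n$ array. Then there exists a solution to $P(A)$.
   Context: Arrays are partially filled and toroidal; $F(A)$ is the set of filled cells. $s_R(i,j)=(i,j+t)$, $s_C(i,j)=(i+t,j)$ with $t\ge1$ minimal such that the cell is filled. For $R,C\in\{-1,1\}^n$, $CN_{RC}(i,j)=s_C^{c_{j'}}(i,j')$ where $(i,j')=s_R^{r_i}(i,j)$. A solution to $P(A)$ is a pair $R,C$ such that $CN_{RC}$ is a permutation of $F(A)$ forming a single cycle of length $|F(A)|$. An $n\times n$ array is cyclically $k$-diagonal if its filled cells are exactly the $(i,j)$ with $i-j\bmod n\in\{0,\dots,k-1\}$. *)

theory Defs
  imports Main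
begin

text \<open>An n x n toroidal, partially filled array is represented by its set of filled
cells F, a subset of {0..<n} x {0..<n} (0-based indices, arithmetic mod n).\<close>

definition is_array :: "int \<Rightarrow> (int \<times> int) set \<Rightarrow> bool" where
  "is_array n F \<longleftrightarrow> n \<ge> 1 \<and> F \<subseteq> {0..<n} \<times> {0..<n}"

definition row_step :: "int \<Rightarrow> (int \<times> int) set \<Rightarrow> int \<Rightarrow> int \<times> int \<Rightarrow> int \<times> int" where
  "row_step n F d c = (let i = fst c; j = snd c;
      t = (LEAST t::nat. t \<ge> 1 \<and> (i, (j + d * int t) mod n) \<in> F)
    in (i, (j + d * int t) mod n))"

definition col_step :: "int \<Rightarrow> (int \<times> int) set \<Rightarrow> int \<Rightarrow> int \<times> int \<Rightarrow> int \<times> int" where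
  "col_step n F d c = (let i = fst c; j = snd c;
      t = (LEAST t::nat. t \<ge> 1 \<and> ((i + d * int t) mod n, j) \<in> F)
    in ((i + d * int t) mod n, j))"

definition CN :: "int \<Rightarrow> (int \<times> int) set \<Rightarrow> (int \<Rightarrow> int) \<Rightarrow> (int \<Rightarrow> int) \<Rightarrow> int \<times> int \<Rightarrow> int \<times> int" where
  "CN n F R C c = (let c' = row_step n F (R (fst c)) c in col_step n F (C (snd c')) c')"

definition is_solution :: "int \<Rightarrow> (int \<times> int) set \<Rightarrow> (int \<Rightarrow> int) \<Rightarrow> (int \<Rightarrow> int) \<Rightarrow> bool" where
  "is_solution n F R C \<longleftrightarrow>
     (\<forall>i\<in>{0..<n}. R i \<in> {-1, 1}) \<and> (\<forall>j\<in>{0..<n}. C j \<in> {-1, 1}) \<and>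
     bij_betw (CN n F R C) F F \<and>
     (\<forall>x\<in>F. \<forall>y\<in>F. \<exists>t::nat. (CN n F R C ^^ t) x = y)"

definition cyclically_k_diagonal :: "int \<Rightarrow> int \<Rightarrow> (int \<times> int) set \<Rightarrow> bool" where
  "cyclically_k_diagonal n k F \<longleftrightarrow>
     F = {(i, j). 0 \<le> i \<and> i < n \<and> 0 \<le> j \<and> j < n \<and> (i - j) mod n \<in> {0..<k}}"

end

theory Submission
  imports Defs
begin

text \<open>Choose every row direction +1 and the column direction +1 exactly in columns 0 and g.
Describe a filled cell (i, j) by its column j and its level (i - j) mod n, which lies in [0, k).
A row step followed by an upward column step lowers the level by 2 and advances the column by 1,
or by g when it leaves level 0 and jumps over the empty part of the row; as k is odd, the cells
reached in this way from the diagonal cell of column c form a closed strand of k cells.  A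
downward step, in column 0 or g, keeps the level instead and so moves the orbit onto another
strand.  Following these switches from the start of strand g, the orbit runs through the strands
g..k-1, then k..n-1, 0, 1..g-1, then g..k-1 a second time, the two passes covering complementary
arcs of the middle strands, and closes up: CN is a single cycle through all n k filled cells.\<close>

lemma funpow_in_closed: "(\<And>x. x \<in> A \<Longrightarrow> f x \<in> A) \<Longrightarrow> x \<in> A \<Longrightarrow> (f ^^ t) x \<in> A"
  by (induction t) auto

lemma funpow_semiconj:
  assumes "\<And>x. x \<in> B \<Longrightarrow> \<phi> x \<in> B" "\<And>x. x \<in> B \<Longrightarrow> f (h x) = h (\<phi> x)" "x \<in> B"
  shows "(f ^^ t) (h x) = h ((\<phi> ^^ t) x)"
  by (induction t) (use assms funpow_in_closed[of B \<phi>] in auto)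

lemma single_orbit_imp_cycle:
  assumes "finite A" "f ` A \<subseteq> A" "x0 \<in> A"
    and orbit: "\<And>y. y \<in> A \<Longrightarrow> \<exists>t. (f ^^ t) (f x0) = y"
  shows "bij_betw f A A" "\<forall>x\<in>A. \<forall>y\<in>A. \<exists>t. (f ^^ t) x = y"
proof -
  have from_x0: "\<exists>t. (f ^^ t) x0 = y" if "y \<in> A" for y
    using orbit[OF that] by (metis funpow_Suc_right o_apply)
  obtain p where p: "(f ^^ Suc p) x0 = x0"
    using orbit[OF assms(3)] by (metis funpow_Suc_right o_apply)
  then have period: "(f ^^ (m mod Suc p)) x0 = (f ^^ m) x0" for m
    by (rule funpow_mod_eq)
  have "A \<subseteq> f ` A"
  proof
    fix y assume "y \<in> A"
    then obtain b where b: "(f ^^ b) x0 = y" using from_x0 by blast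
    have "Suc (b + p) mod Suc p = b mod Suc p"
      by (metis add_Suc_right mod_add_self2)
    then have "y = (f ^^ (Suc (b + p))) x0"
      using period[of b] period[of "Suc (b + p)"] b by simp
    also have "\<dots> = f ((f ^^ (b + p)) x0)" by simp
    finally show "y \<in> f ` A"
      using funpow_in_closed[of A f x0 "b + p"] assms(2,3) by blast
  qed
  then have "inj_on f A" "f ` A = A"
    using finite_surj_inj[OF assms(1)] assms(2) by auto
  then show "bij_betw f A A" by (simp add: bij_betw_def)
  show "\<forall>x\<in>A. \<forall>y\<in>A. \<exists>t. (f ^^ t) x = y"
  proof (intro ballI)
    fix x y assume "x \<in> A" "y \<in> A"
    then obtain a b where a: "(f ^^ a) x0 = x" and b: "(f ^^ b) x0 = y"
      using from_x0 by blast
    define t where "t = b + Suc p * a - a"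
    have "t + a = b + Suc p * a" by (simp add: t_def)
    then have "(t + a) mod Suc p = b mod Suc p" by (metis mod_mult_self2 mult.commute)
    then have "(f ^^ (t + a)) x0 = y"
      using period[of "t + a"] period[of b] b by simp
    then show "\<exists>t. (f ^^ t) x = y"
      using a by (metis funpow_add o_apply)
  qed
qed

section \<open>Steps in a cyclically k-diagonal array\<close>

lemma Least_nat_ge1_eq:
  assumes "1 \<le> t0" "P t0" "\<And>t. 1 \<le> t \<Longrightarrow> t < t0 \<Longrightarrow> \<not> P t"
  shows "(LEAST t::nat. 1 \<le> t \<and> P t) = t0"
  using assms by (intro Least_equality) (auto simp: not_less[symmetric])

definition band_jump :: "int \<Rightarrow> int \<Rightarrow> int \<Rightarrow> int" where
  "band_jump n k e = (if e = 0 then n - k + 1 else 1)"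

lemma band_jump_Least:
  fixes n k e :: int
  assumes "0 < k" "k < n" "0 \<le> e" "e < k"
  shows "int (LEAST t::nat. 1 \<le> t \<and> (e - int t) mod n < k) = band_jump n k e"
proof -
  have "(LEAST t::nat. 1 \<le> t \<and> (e - int t) mod n < k) = nat (band_jump n k e)"
    unfolding band_jump_def
  proof (rule Least_nat_ge1_eq)
    show "1 \<le> nat (if e = 0 then n - k + 1 else 1)" using assms by auto
    show "(e - int (nat (if e = 0 then n - k + 1 else 1))) mod n < k"
    proof (cases "e = 0")
      case True
      have "(k - 1 - n) mod n = k - 1"
        using assms by (simp add: minus_mod_self2)
      then show ?thesis using True assms by (simp add: algebra_simps)
    qed (use assms in simp)
  next
    fix t :: nat
    assume t: "1 \<le> t" "t < nat (if e = 0 then n - k + 1 else 1)"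
    then have "e = 0" "int t \<le> n - k" by (auto split: if_splits)
    then have "(e - int t) mod n = n - int t"
      using t(1) assms by (simp add: zmod_zminus1_eq_if)
    with \<open>int t \<le> n - k\<close> show "\<not> (e - int t) mod n < k" by simp
  qed
  then show ?thesis using assms by (simp add: band_jump_def)
qed

lemma mod_less_double:
  fixes x n :: int
  assumes "0 \<le> x" "x < 2 * n"
  shows "x mod n = (if x < n then x else x - n)"
proof (cases "x < n")
  case False
  have "x mod n = (x - n) mod n" by (simp add: minus_mod_self2)
  also have "\<dots> = x - n" using False assms by (intro mod_pos_pos_trivial) auto
  finally show ?thesis using False by simp
qed (use assms in simp)

lemma band_level_reflect:
  fixes n k e x :: int
  assumes "0 < k" "k \<le> n"
  shows "(k - 1 - e - x) mod n < k \<longleftrightarrow> (e + x) mod n < k"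
proof -
  define r where "r = (e + x) mod n"
  have r: "0 \<le> r" "r < n" using assms by (auto simp: r_def)
  have "(k - 1 - e - x) mod n = (k - 1 - r) mod n"
    unfolding r_def by (metis diff_diff_eq mod_diff_right_eq)
  also have "\<dots> = (if r < k then k - 1 - r else n + k - 1 - r)"
  proof (cases "r < k")
    case False
    have "(k - 1 - r) mod n = (k - 1 - r + n) mod n" by simp
    also have "\<dots> = k - 1 - r + n" using False r assms by (intro mod_pos_pos_trivial) auto
    finally show ?thesis using False by simp
  qed (use r assms in simp)
  finally show ?thesis using r unfolding r_def[symmetric] by auto
qed

definition band_cell :: "int \<Rightarrow> int \<Rightarrow> int \<Rightarrow> int \<times> int" where
  "band_cell n j e = ((j + e) mod n, j)"

lemma band_cell_level: "((j + e) mod n - j) mod n = e mod (n::int)"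
  by (simp add: mod_diff_left_eq)

context
  fixes n k :: int and F :: "(int \<times> int) set"
  assumes F: "cyclically_k_diagonal n k F" and k: "0 < k" "k < n"
begin

lemma mem_band_iff: "(i, j) \<in> F \<longleftrightarrow> 0 \<le> i \<and> i < n \<and> 0 \<le> j \<and> j < n \<and> (i - j) mod n < k"
  using F k unfolding cyclically_k_diagonal_def by auto

lemma band_cell_mem: "0 \<le> j \<Longrightarrow> j < n \<Longrightarrow> 0 \<le> e \<Longrightarrow> e < k \<Longrightarrow> band_cell n j e \<in> F"
  using k by (simp add: band_cell_def mem_band_iff band_cell_level)

lemma band_cell_cases:
  assumes "(i, j) \<in> F"
  obtains e where "0 \<le> j" "j < n" "0 \<le> e" "e < k" "band_cell n j e = (i, j)"
proof
  show "band_cell n j ((i - j) mod n) = (i, j)"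
    using assms by (simp add: band_cell_def mem_band_iff mod_add_right_eq)
qed (use assms k in \<open>auto simp: mem_band_iff\<close>)

lemma row_step_band:
  assumes "0 \<le> j" "j < n" "0 \<le> e" "e < k"
  shows "row_step n F 1 (band_cell n j e) = band_cell n ((j + band_jump n k e) mod n) ((e - 1) mod k)"
proof -
  have mem: "((j + e) mod n, (j + int t) mod n) \<in> F \<longleftrightarrow> (e - int t) mod n < k" for t
    using k by (simp add: mem_band_iff mod_diff_eq)
  have "((j + band_jump n k e) mod n + (e - 1) mod k) mod n = (j + e) mod n"
  proof (cases "e = 0")
    case True
    have "(-1) mod k = k - 1" using k(1) by (rule zmod_minus1)
    moreover have "(j + (n - k + 1) + (k - 1)) mod n = j mod n" by simp
    ultimately show ?thesis using True by (simp add: band_jump_def mod_add_left_eq)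
  qed (use assms in \<open>simp add: band_jump_def mod_add_left_eq\<close>)
  then show ?thesis
    using band_jump_Least[OF k assms(3,4)]
    by (simp add: row_step_def band_cell_def mem)
qed

lemma col_step_up_band:
  assumes "0 \<le> j" "j < n" "0 \<le> e" "e < k"
  shows "col_step n F (-1) (band_cell n j e) = band_cell n j ((e - 1) mod k)"
proof -
  have "((j + e) mod n - int t) mod n = (j + (e - int t)) mod n" for t
    by (simp add: mod_diff_left_eq add_diff_eq)
  then have mem: "(((j + e) mod n - int t) mod n, j) \<in> F \<longleftrightarrow> (e - int t) mod n < k" for t
    using k assms by (simp add: mem_band_iff band_cell_level)
  have "((j + e) mod n - band_jump n k e) mod n = (j + (e - 1) mod k) mod n"
  proof (cases "e = 0")
    case True
    have "(-1) mod k = k - 1" using k(1) by (rule zmod_minus1)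
    moreover have "(j - (n - k + 1)) mod n = (j + (k - 1)) mod n"
      using minus_mod_self2[of "j + (k - 1)" n] by (simp add: algebra_simps)
    ultimately show ?thesis using True by (simp add: band_jump_def mod_diff_left_eq)
  qed (use assms in \<open>simp add: band_jump_def mod_diff_left_eq add_diff_eq\<close>)
  then show ?thesis
    using band_jump_Least[OF k assms(3,4)]
    by (simp add: col_step_def band_cell_def Let_def mem)
qed

lemma col_step_down_band:
  assumes "0 \<le> j" "j < n" "0 \<le> e" "e < k"
  shows "col_step n F 1 (band_cell n j e) = band_cell n j ((e + 1) mod k)"
proof -
  have "((j + e) mod n + int t) mod n = (j + (e + int t)) mod n" for t
    by (simp add: mod_add_left_eq add.assoc)
  then have "(((j + e) mod n + int t) mod n, j) \<in> F \<longleftrightarrow> (e + int t) mod n < k" for t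
    using k assms by (simp add: mem_band_iff band_cell_level)
  then have mem: "(((j + e) mod n + int t) mod n, j) \<in> F \<longleftrightarrow> (k - 1 - e - int t) mod n < k" for t
    using band_level_reflect[of k n e "int t"] k by simp
  have "((j + e) mod n + band_jump n k (k - 1 - e)) mod n = (j + (e + 1) mod k) mod n"
  proof (cases "e = k - 1")
    case True
    have "(j + (k - 1) + (n - k + 1)) mod n = j mod n" by simp
    then show ?thesis using True by (simp add: band_jump_def mod_add_left_eq)
  qed (use assms in \<open>simp add: band_jump_def mod_add_left_eq add.assoc\<close>)
  then show ?thesis
    using band_jump_Least[of k n "k - 1 - e"] k assms
    by (simp add: col_step_def band_cell_def Let_def mem)
qed

end

section \<open>The strand dynamics\<close>

locale strand_dynamics =
  fixes n g k :: int
  assumes g: "3 \<le> g" "odd g" and k: "2 * g + 1 \<le> k" "odd k" and n: "n = k + g - 1"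
begin

text \<open>Kept as inequalities: the equation would make the simplifier rewrite \<open>n\<close> inside
the locale constants.\<close>
lemma n_bounds: "n \<le> k + g - 1" "k + g - 1 \<le> n"
  using n by simp_all

lemma k_bounds: "0 < k" "k < n"
  using g k n_bounds by simp_all

text \<open>A state (c, p) stands for phase p of strand c.  The orbit leaves strand c after phase p
exactly when \<open>switch c p\<close>; cf. \<open>strand_col_next_eq_switch\<close> below.\<close>
definition switch :: "int \<Rightarrow> int \<Rightarrow> bool" where
  "switch c p \<longleftrightarrow>
     (0 \<le> c \<and> c \<le> k - 1 \<and> p = k - 1 - c) \<or> (g \<le> c \<and> c \<le> n - 1 \<and> p = n - c) \<or> (c = 0 \<and> p = 0)"

definition next_state :: "int \<times> int \<Rightarrow> int \<times> int" where
  "next_state = (\<lambda>(c, p). if \<not> switch c p then (c, (p + 1) mod k)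
     else if p = 0 then ((c + g) mod n, 0) else ((c + 1) mod n, p))"

definition reachable :: "int \<times> int \<Rightarrow> int \<times> int \<Rightarrow> bool" where
  "reachable x y \<longleftrightarrow> (\<exists>t. (next_state ^^ t) x = y)"

lemma reachable_refl: "reachable x x"
  unfolding reachable_def by (metis funpow_0)

lemma reachable_next: "reachable x y \<Longrightarrow> reachable x (next_state y)"
  unfolding reachable_def by (metis funpow.simps(2) o_apply)

lemma reachable_switch:
  assumes "reachable x (c, p)" "switch c p" "p \<noteq> 0"
  shows "reachable x ((c + 1) mod n, p)"
  using reachable_next[OF assms(1)] assms(2,3) by (simp add: next_state_def)

lemma reachable_walk:
  assumes "reachable x (c, p)" "0 \<le> p" "p \<le> q" "q < k" "\<And>r. p \<le> r \<Longrightarrow> r < q \<Longrightarrow> \<not> switch c r"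
  shows "reachable x (c, q)"
  using assms(3-5)
proof (induction q rule: int_ge_induct)
  case (step q)
  have "next_state (c, q) = (c, q + 1)"
    using step.hyps step.prems assms(2) by (simp add: next_state_def)
  then show ?case using reachable_next[OF step.IH] step by simp
qed (use assms(1) in simp)

definition arc :: "int \<Rightarrow> int \<Rightarrow> int set" where
  "arc e x = (if e \<le> x then {e..x} else {e..<k} \<union> {0..x})"

lemma arc_end: "0 \<le> x \<Longrightarrow> x \<in> arc e x"
  by (simp add: arc_def)

lemma reachable_arc:
  assumes "reachable s (c, e)" "0 \<le> e" "e < k" "0 \<le> x" "x < k"
    and no_switch: "\<And>r. r \<in> arc e x \<Longrightarrow> r \<noteq> x \<Longrightarrow> \<not> switch c r"
    and q: "q \<in> arc e x"
  shows "reachable s (c, q)"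
proof (cases "e \<le> x \<or> e \<le> q")
  case True
  with q assms(5) show ?thesis
    by (intro reachable_walk[OF assms(1,2)] no_switch) (auto simp: arc_def split: if_splits)
next
  case False
  have "reachable s (c, k - 1)"
    using False assms(3) by (intro reachable_walk[OF assms(1,2)] no_switch) (auto simp: arc_def)
  moreover have "\<not> switch c (k - 1)"
    using False assms(3) by (intro no_switch) (auto simp: arc_def)
  ultimately have "reachable s (c, 0)"
    using reachable_next by (fastforce simp: next_state_def)
  with False q assms(5) show ?thesis
    by (intro reachable_walk[of s c 0 q] no_switch) (auto simp: arc_def)
qed

text \<open>A middle strand g \<le> c \<le> k - 1 switches at the two phases k - 1 - c and n - c and is
run through twice, once along each of the two arcs between them; leaving strand c along one arc
enters strand c + 1 on its other arc.\<close>
definition pass_entry :: "bool \<Rightarrow> int \<Rightarrow> int" where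
  "pass_entry b c = (if b then (n - c + 1) mod k else k - c)"

definition pass_exit :: "bool \<Rightarrow> int \<Rightarrow> int" where
  "pass_exit b c = (if b then k - 1 - c else n - c)"

lemma pass_arc_eq:
  assumes "g \<le> c" "c \<le> k - 1"
  shows "arc (pass_entry b c) (pass_exit b c) =
    (if \<not> b then {k - c..n - c} else if c = g then {0..k - 1 - g} else {n - c + 1..<k} \<union> {0..k - 1 - c})"
proof (cases "b \<and> c = g")
  case True
  then have "n - c + 1 = k" using n_bounds by simp
  then show ?thesis using True assms g k by (simp add: arc_def pass_entry_def pass_exit_def)
next
  case False
  then show ?thesis using assms g k n_bounds by (auto simp: arc_def pass_entry_def pass_exit_def)
qed

lemma reachable_pass_arc:
  assumes "g \<le> c" "c \<le> k - 1" "reachable s (c, pass_entry b c)"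
    and "q \<in> arc (pass_entry b c) (pass_exit b c)"
  shows "reachable s (c, q)"
proof (rule reachable_arc[OF assms(3) _ _ _ _ _ assms(4)])
  fix r assume "r \<in> arc (pass_entry b c) (pass_exit b c)" "r \<noteq> pass_exit b c"
  then show "\<not> switch c r"
    using assms(1,2) g k n_bounds unfolding pass_arc_eq[OF assms(1,2)]
    by (auto simp: pass_exit_def switch_def split: if_splits)
qed (use assms(1,2) g k n_bounds in \<open>auto simp: pass_entry_def pass_exit_def\<close>)

lemma pass_arcs_cover:
  assumes "g \<le> c" "c \<le> k - 1" "0 \<le> q" "q < k"
  shows "q \<in> arc (pass_entry True c) (pass_exit True c) \<union> arc (pass_entry False c) (pass_exit False c)"
  using assms g k n_bounds by (auto simp: pass_arc_eq)

lemma reachable_pass: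
  assumes "reachable s (g, pass_entry b g)" "g \<le> c" "c \<le> k - 1"
  shows "reachable s (c, pass_entry (b = even (c - g)) c)"
  using assms(2,3)
proof (induction c rule: int_ge_induct)
  case (step c)
  define b' where "b' = (b = even (c - g))"
  have c: "g \<le> c" "c \<le> k - 1" using step by simp_all
  have entry: "reachable s (c, pass_entry b' c)"
    using step by (simp add: b'_def)
  have "0 \<le> pass_exit b' c" using c g k n_bounds by (simp add: pass_exit_def)
  then have "reachable s (c, pass_exit b' c)"
    by (rule reachable_pass_arc[OF c entry arc_end])
  then have "reachable s ((c + 1) mod n, pass_exit b' c)"
    using step g k n_bounds by (intro reachable_switch) (auto simp: switch_def pass_exit_def)
  moreover have "(c + 1) mod n = c + 1" using step g k n_bounds by simp
  moreover have "(b = even (c + 1 - g)) = (\<not> b')"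
  proof -
    have "even (c + 1 - g) \<longleftrightarrow> odd (c - g)" by presburger
    then show ?thesis unfolding b'_def by blast
  qed
  moreover have "pass_exit b' c = pass_entry (\<not> b') (c + 1)"
    using step g k n_bounds by (auto simp: pass_exit_def pass_entry_def)
  ultimately show ?case by simp
qed (use assms(1) in simp)

lemma reachable_pass_end:
  assumes "reachable s (g, pass_entry b g)"
  shows "reachable s (next_state (k - 1, pass_exit (\<not> b) (k - 1)))"
proof -
  have "odd (k - 1 - g)" using g k by presburger
  then have "reachable s (k - 1, pass_entry (\<not> b) (k - 1))"
    using reachable_pass[OF assms, of "k - 1"] g k by auto
  moreover have "0 \<le> pass_exit (\<not> b) (k - 1)" using g k n_bounds by (simp add: pass_exit_def)
  moreover have "g \<le> k - 1" using g k by simp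
  ultimately have "reachable s (k - 1, pass_exit (\<not> b) (k - 1))"
    using reachable_pass_arc[OF _ _ _ arc_end] by simp
  then show ?thesis by (rule reachable_next)
qed

lemma reachable_column:
  assumes "reachable s (c, (x + 1) mod k)" "0 \<le> x" "x < k"
    and only_x: "\<And>r. 0 \<le> r \<Longrightarrow> r < k \<Longrightarrow> switch c r \<Longrightarrow> r = x"
    and "0 \<le> q" "q < k"
  shows "reachable s (c, q)"
proof (rule reachable_arc[OF assms(1) _ _ assms(2,3)])
  have "arc ((x + 1) mod k) x = {0..<k}"
    using assms(2,3) by (cases "x = k - 1") (auto simp: arc_def)
  then show "q \<in> arc ((x + 1) mod k) x" "\<And>r. r \<in> arc ((x + 1) mod k) x \<Longrightarrow> r \<noteq> x \<Longrightarrow> \<not> switch c r"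
    using assms(5,6) only_x by auto
qed (use assms(2,3) in auto)

lemma reachable_columns_high:
  assumes "reachable s (k, g)" "k \<le> c" "c \<le> n - 1" "0 \<le> q" "q < k"
  shows "reachable s (c, q)"
proof -
  have only: "\<And>c r. k \<le> c \<Longrightarrow> c \<le> n - 1 \<Longrightarrow> switch c r \<longleftrightarrow> r = n - c"
    using g k n_bounds by (auto simp: switch_def)
  have entry: "(n - c + 1) mod k = n - c + 1" if "k \<le> c" "c \<le> n - 1" for c
    using that g k n_bounds by simp
  have "reachable s (c, n - c + 1)" if "k \<le> c" "c \<le> n - 1" for c
    using that
  proof (induction c rule: int_ge_induct)
    case (step c)
    have "reachable s (c, (n - c + 1) mod k)" using step entry[of c] by simp
    then have "reachable s (c, n - c)"
      by (rule reachable_column) (use step only[of c] g k n_bounds in auto)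
    then have "reachable s ((c + 1) mod n, n - c)"
      using step only[of c] g k n_bounds by (intro reachable_switch) auto
    then show ?case using step g k n_bounds by (simp add: algebra_simps)
  next
    case base
    have "n - k + 1 = g" using n_bounds by linarith
    then show ?case using assms(1) by simp
  qed
  then have "reachable s (c, (n - c + 1) mod k)" using assms entry[of c] by simp
  then show ?thesis
    by (rule reachable_column) (use assms only[of c] g k n_bounds in auto)
qed

lemma reachable_columns_low:
  assumes "reachable s (1, k - 1)" "1 \<le> c" "c \<le> g"
  shows "reachable s (c, k - c)" "c < g \<Longrightarrow> 0 \<le> q \<Longrightarrow> q < k \<Longrightarrow> reachable s (c, q)"
proof -
  have only: "\<And>c r. 1 \<le> c \<Longrightarrow> c < g \<Longrightarrow> 0 \<le> r \<Longrightarrow> r < k \<Longrightarrow> switch c r \<longleftrightarrow> r = k - 1 - c"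
    using g k n_bounds by (auto simp: switch_def)
  have entry: "(k - 1 - c + 1) mod k = k - c" if "1 \<le> c" "c < g" for c
  proof -
    have "(k - c) mod k = k - c" by (rule mod_pos_pos_trivial) (use that g k in auto)
    then show ?thesis by simp
  qed
  have column: "reachable s (c, q)"
    if "reachable s (c, k - c)" "1 \<le> c" "c < g" "0 \<le> q" "q < k" for c q
  proof -
    have "reachable s (c, (k - 1 - c + 1) mod k)" using that(1) entry[OF that(2,3)] by simp
    then show ?thesis by (rule reachable_column) (use that only g k in auto)
  qed
  show entered: "reachable s (c, k - c)"
    using assms(2,3)
  proof (induction c rule: int_ge_induct)
    case base
    then show ?case using assms(1) by simp
  next
    case (step c)
    have "reachable s (c, k - 1 - c)"
      using step g k by (auto intro: column)
    then have "reachable s ((c + 1) mod n, k - 1 - c)"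
      using step g k n_bounds by (intro reachable_switch) (auto simp: switch_def)
    then show ?case using step g k n_bounds by (simp add: algebra_simps)
  qed
  show "c < g \<Longrightarrow> 0 \<le> q \<Longrightarrow> q < k \<Longrightarrow> reachable s (c, q)"
    using column[OF entered] assms(2) by simp
qed

lemma next_state_origin: "next_state (0, 0) = (g, 0)"
  using g k n_bounds by (simp add: next_state_def switch_def)

lemma reachable_passes:
  assumes "reachable s (g, pass_entry True g)" "reachable s (g, pass_entry False g)"
    and "g \<le> c" "c \<le> k - 1" "0 \<le> q" "q < k"
  shows "reachable s (c, q)"
proof -
  obtain b where "q \<in> arc (pass_entry b c) (pass_exit b c)"
    using pass_arcs_cover[OF assms(3-6)] by blast
  moreover have "reachable s (c, pass_entry b c)"
    using reachable_pass[OF assms(1) assms(3,4)] reachable_pass[OF assms(2) assms(3,4)]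
    by (cases "b = even (c - g)") auto
  ultimately show ?thesis using reachable_pass_arc assms(3,4) by blast
qed

lemma reachable_from_start:
  assumes "0 \<le> c" "c < n" "0 \<le> q" "q < k"
  shows "reachable (g, 0) (c, q)"
proof -
  let ?s = "(g, 0)"
  have "n - g + 1 = k" using n_bounds by linarith
  then have first_pass: "reachable ?s (g, pass_entry True g)"
    using reachable_refl by (simp add: pass_entry_def)
  have "next_state (k - 1, pass_exit False (k - 1)) = (k, g)"
    using g k n_bounds by (simp add: next_state_def switch_def pass_exit_def)
  then have high: "reachable ?s (c, q)" if "k \<le> c" "c \<le> n - 1" "0 \<le> q" "q < k" for c q
    using reachable_columns_high[OF _ that] reachable_pass_end[OF first_pass] by simp
  have "reachable ?s ((n - 1 + 1) mod n, 1)"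
    using high[of "n - 1" 1] g k n_bounds by (intro reachable_switch) (auto simp: switch_def)
  then have "reachable ?s (0, 1)" by simp
  then have zero: "reachable ?s (0, q)" if "1 \<le> q" "q < k" for q
    by (rule reachable_walk) (use that g k n_bounds in \<open>auto simp: switch_def\<close>)
  have "reachable ?s ((0 + 1) mod n, k - 1)"
    using zero[of "k - 1"] g k n_bounds by (intro reachable_switch) (auto simp: switch_def)
  then have low_entry: "reachable ?s (1, k - 1)" using g k n_bounds by simp
  have second_pass: "reachable ?s (g, pass_entry False g)"
    using reachable_columns_low(1)[OF low_entry, of g] g by (simp add: pass_entry_def)
  have "(k - 1 + g) mod n = n mod n" using n_bounds by (intro arg_cong[where f = "\<lambda>x. x mod n"]) linarith
  then have "next_state (k - 1, pass_exit True (k - 1)) = (0, 0)"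
    using g k n_bounds by (simp add: next_state_def switch_def pass_exit_def)
  then have "reachable ?s (0, 0)"
    using reachable_pass_end[OF second_pass] by simp
  consider "c = 0" | "1 \<le> c" "c < g" | "g \<le> c" "c \<le> k - 1" | "k \<le> c" "c \<le> n - 1"
    using assms by linarith
  then show ?thesis
  proof cases
    case 1
    then show ?thesis using zero \<open>reachable ?s (0, 0)\<close> assms by (cases "q = 0") auto
  qed (use reachable_columns_low(2)[OF low_entry] reachable_passes[OF first_pass second_pass] high assms
       in auto)
qed

end

section \<open>The orbit in the array\<close>

locale diagonal_array = strand_dynamics +
  fixes F :: "(int \<times> int) set"
  assumes F: "cyclically_k_diagonal n k F"
begin

lemma band_jump_eq: "band_jump n k e = (if e = 0 then g else 1)"
  using n_bounds by (simp add: band_jump_def)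

definition col_dir :: "int \<Rightarrow> int" where
  "col_dir j = (if j = 0 \<or> j = g then 1 else -1)"

lemma CN_band_cell:
  assumes "0 \<le> j" "j < n" "0 \<le> e" "e < k"
  defines "j' \<equiv> (j + (if e = 0 then g else 1)) mod n"
  shows "CN n F (\<lambda>_. 1) col_dir (band_cell n j e) =
    band_cell n j' (if j' = 0 \<or> j' = g then e else (e - 2) mod k)"
proof -
  have row: "row_step n F 1 (band_cell n j e) = band_cell n j' ((e - 1) mod k)"
    using row_step_band[OF F k_bounds assms(1-4)] by (simp add: band_jump_eq j'_def)
  have j': "0 \<le> j'" "j' < n" "0 \<le> (e - 1) mod k" "(e - 1) mod k < k"
    using k_bounds by (simp_all add: j'_def)
  show ?thesis
  proof (cases "j' = 0 \<or> j' = g")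
    case True
    have "((e - 1) mod k + 1) mod k = e"
      using assms(3,4) by (simp add: mod_add_left_eq)
    then show ?thesis
      using True row col_step_down_band[OF F k_bounds j']
      by (simp add: CN_def col_dir_def band_cell_def)
  next
    case False
    have "((e - 1) mod k - 1) mod k = (e - 2) mod k"
      by (simp add: mod_diff_left_eq)
    then show ?thesis
      using False row col_step_up_band[OF F k_bounds j']
      by (simp add: CN_def col_dir_def band_cell_def)
  qed
qed

text \<open>With every column step upward, the p-th cell after the diagonal cell (c, c) lies in column
c + g + p - 1 (the first row step jumps over the g - 1 empty cells) at level -2p.\<close>
definition strand_col :: "int \<Rightarrow> int \<Rightarrow> int" where
  "strand_col c p = (if p = 0 then c else (c + g + p - 1) mod n)"

definition strand_level :: "int \<Rightarrow> int" where
  "strand_level p = (- 2 * p) mod k"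

definition strand_cell :: "int \<times> int \<Rightarrow> int \<times> int" where
  "strand_cell = (\<lambda>(c, p). band_cell n (strand_col c p) (strand_level p))"

lemma strand_level_eq_0_iff:
  assumes "0 \<le> p" "p < k"
  shows "strand_level p = 0 \<longleftrightarrow> p = 0"
proof
  assume "strand_level p = 0"
  then have "k dvd 2 * p" by (simp add: strand_level_def mod_eq_0_iff_dvd)
  moreover have "coprime k 2" using k by simp
  ultimately have "k dvd p" by (simp add: coprime_dvd_mult_right_iff)
  then show "p = 0" using assms by (auto dest: zdvd_imp_le)
qed (simp add: strand_level_def)

lemma strand_level_next: "strand_level ((p + 1) mod k) = (strand_level p - 2) mod k"
proof -
  have "- 2 * (p + 1) = - 2 * p - 2" by simp
  then have "strand_level ((p + 1) mod k) = (- 2 * p - 2) mod k"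
    unfolding strand_level_def by (metis mod_mult_right_eq)
  also have "\<dots> = (strand_level p - 2) mod k"
    unfolding strand_level_def by (rule mod_diff_left_eq[symmetric])
  finally show ?thesis .
qed

lemma strand_col_next:
  assumes "0 \<le> c" "c < n" "0 \<le> p" "p < k"
  shows "strand_col c ((p + 1) mod k) = (strand_col c p + (if p = 0 then g else 1)) mod n"
proof (cases "p + 1 < k")
  case True
  have "((c + g + p - 1) mod n + 1) mod n = (c + g + p) mod n"
    by (simp add: mod_add_left_eq)
  then show ?thesis using True assms g k by (auto simp: strand_col_def algebra_simps)
next
  case False
  then have p: "p = k - 1" "p \<noteq> 0" using assms g k by simp_all
  have "(strand_col c p + (if p = 0 then g else 1)) mod n = ((c + g + p - 1) mod n + 1) mod n"
    using p by (simp add: strand_col_def)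
  also have "\<dots> = (c + g + p) mod n" by (simp add: mod_add_left_eq)
  also have "c + g + p = c + n" using p n_bounds by linarith
  finally show ?thesis using assms p by (simp add: strand_col_def)
qed

lemma strand_col_next_eq_switch:
  assumes "0 \<le> c" "c < n" "0 \<le> p" "p < k"
  shows "strand_col c ((p + 1) mod k) = 0 \<or> strand_col c ((p + 1) mod k) = g \<longleftrightarrow> switch c p"
proof (cases "p + 1 < k")
  case True
  then have "strand_col c ((p + 1) mod k) = (c + g + p) mod n"
    using assms by (simp add: strand_col_def algebra_simps)
  also have "\<dots> = (if c + g + p < n then c + g + p else c + g + p - n)"
    using assms g True n_bounds by (intro mod_less_double) auto
  finally show ?thesis using assms g k True n_bounds by (auto simp: switch_def)
next
  case False
  then have "p = k - 1" using assms by simp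
  then show ?thesis using assms g k n_bounds by (auto simp: strand_col_def switch_def)
qed

lemma strand_col_bounds: "0 \<le> c \<Longrightarrow> c < n \<Longrightarrow> 0 \<le> strand_col c p \<and> strand_col c p < n"
  using k_bounds by (simp add: strand_col_def)

lemma strand_level_bounds: "0 \<le> strand_level p \<and> strand_level p < k"
  using k_bounds by (simp add: strand_level_def)

lemma strand_col_switch:
  assumes "0 \<le> c" "c < n" "0 \<le> p" "p < k" "switch c p"
  shows "strand_col (fst (next_state (c, p))) p = strand_col c ((p + 1) mod k)"
proof (cases "p = 0")
  case True
  then show ?thesis using assms strand_col_next[OF assms(1-4)] by (simp add: next_state_def strand_col_def)
next
  case False
  have "strand_col ((c + 1) mod n) p = ((c + 1) mod n + (g + p - 1)) mod n"
    using False by (simp add: strand_col_def add.assoc add_diff_eq)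
  also have "\<dots> = (c + 1 + (g + p - 1)) mod n" by (rule mod_add_left_eq)
  also have "c + 1 + (g + p - 1) = c + g + p - 1 + 1" by simp
  also have "(c + g + p - 1 + 1) mod n = ((c + g + p - 1) mod n + 1) mod n" by (rule mod_add_left_eq[symmetric])
  finally show ?thesis using False assms strand_col_next[OF assms(1-4)] by (simp add: next_state_def strand_col_def)
qed

lemma CN_strand_cell:
  assumes "0 \<le> c" "c < n" "0 \<le> p" "p < k"
  shows "CN n F (\<lambda>_. 1) col_dir (strand_cell (c, p)) = strand_cell (next_state (c, p))"
proof -
  define j' where "j' = strand_col c ((p + 1) mod k)"
  have CN: "CN n F (\<lambda>_. 1) col_dir (strand_cell (c, p)) =
    band_cell n j' (if switch c p then strand_level p else (strand_level p - 2) mod k)"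
    using CN_band_cell strand_col_bounds[OF assms(1,2)] strand_level_bounds
      strand_level_eq_0_iff[OF assms(3,4)] strand_col_next[OF assms]
      strand_col_next_eq_switch[OF assms]
    by (simp add: strand_cell_def j'_def)
  show ?thesis
  proof (cases "switch c p")
    case True
    have "snd (next_state (c, p)) = p"
      using True by (simp add: next_state_def)
    then show ?thesis
      using CN True strand_col_switch[OF assms True] by (simp add: strand_cell_def j'_def prod.case_eq_if)
  next
    case False
    then show ?thesis
      using CN strand_level_next by (simp add: strand_cell_def next_state_def j'_def)
  qed
qed

lemma next_state_in_box: "x \<in> {0..<n} \<times> {0..<k} \<Longrightarrow> next_state x \<in> {0..<n} \<times> {0..<k}"
  using k_bounds by (auto simp: next_state_def)

lemma strand_level_surj:
  assumes "0 \<le> e" "e < k"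
  shows "strand_level ((- e * ((k + 1) div 2)) mod k) = e"
proof -
  have "strand_level ((- e * ((k + 1) div 2)) mod k) = (- 2 * (- e * ((k + 1) div 2))) mod k"
    unfolding strand_level_def by (rule mod_mult_right_eq)
  also have "- 2 * (- e * ((k + 1) div 2)) = e * (2 * ((k + 1) div 2))" by simp
  also have "2 * ((k + 1) div 2) = k + 1"
    by (rule even_two_times_div_two) (use k(2) in simp)
  also have "(e * (k + 1)) mod k = e" using assms by (simp add: algebra_simps)
  finally show ?thesis .
qed

lemma strand_col_surj:
  assumes "0 \<le> j" "j < n"
  shows "strand_col (if p = 0 then j else (j - g - p + 1) mod n) p = j"
proof (cases "p = 0")
  case False
  have "strand_col ((j - g - p + 1) mod n) p = ((j - g - p + 1) mod n + (g + p - 1)) mod n"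
    using False by (simp add: strand_col_def add.assoc add_diff_eq)
  also have "\<dots> = (j - g - p + 1 + (g + p - 1)) mod n" by (rule mod_add_left_eq)
  finally show ?thesis using False assms by simp
qed (simp add: strand_col_def)

lemma strand_cell_image: "strand_cell ` ({0..<n} \<times> {0..<k}) = F"
proof
  show "strand_cell ` ({0..<n} \<times> {0..<k}) \<subseteq> F"
    using band_cell_mem[OF F k_bounds] strand_col_bounds strand_level_bounds
    by (auto simp: strand_cell_def)
next
  show "F \<subseteq> strand_cell ` ({0..<n} \<times> {0..<k})"
  proof
    fix y assume "y \<in> F"
    then obtain i j e where y: "y = (i, j)" and j: "0 \<le> j" "j < n"
      and e: "0 \<le> e" "e < k" "band_cell n j e = (i, j)"
      using band_cell_cases[OF F k_bounds] by (metis surj_pair)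
    define p where "p = (- e * ((k + 1) div 2)) mod k"
    define c where "c = (if p = 0 then j else (j - g - p + 1) mod n)"
    have "(c, p) \<in> {0..<n} \<times> {0..<k}"
      using j k_bounds by (auto simp: c_def p_def)
    moreover have "strand_level p = e" unfolding p_def by (rule strand_level_surj[OF e(1,2)])
    moreover have "strand_col c p = j" unfolding c_def by (rule strand_col_surj[OF j])
    ultimately have "(c, p) \<in> {0..<n} \<times> {0..<k}" "strand_cell (c, p) = y"
      using e y by (simp_all add: strand_cell_def)
    then show "y \<in> strand_cell ` ({0..<n} \<times> {0..<k})" by blast
  qed
qed

theorem is_solution_col_dir: "is_solution n F (\<lambda>_. 1) col_dir"
proof -
  let ?f = "CN n F (\<lambda>_. 1) col_dir" and ?B = "{0..<n} \<times> {0..<k}"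
  have conj: "?f (strand_cell x) = strand_cell (next_state x)" if "x \<in> ?B" for x
    using that CN_strand_cell by auto
  have iter: "(?f ^^ t) (strand_cell x) = strand_cell ((next_state ^^ t) x)" if "x \<in> ?B" for x t
    using funpow_semiconj[where f = ?f and h = strand_cell, OF next_state_in_box conj that] .
  have "finite F" using strand_cell_image[symmetric] by simp
  moreover have "?f ` F \<subseteq> F"
    using strand_cell_image conj next_state_in_box by auto
  moreover have origin: "(0, 0) \<in> ?B" using k_bounds by simp
  moreover have "\<exists>t. (?f ^^ t) (?f (strand_cell (0, 0))) = y" if "y \<in> F" for y
  proof -
    obtain c q where cq: "(c, q) \<in> ?B" "y = strand_cell (c, q)"
      using \<open>y \<in> F\<close> strand_cell_image by auto
    then obtain t where "(next_state ^^ t) (g, 0) = (c, q)"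
      using reachable_from_start unfolding reachable_def by auto
    then have "(?f ^^ t) (strand_cell (g, 0)) = y"
      using iter[of "(g, 0)" t] g k n_bounds cq by simp
    then show ?thesis
      using conj[OF origin] next_state_origin by auto
  qed
  ultimately have "bij_betw ?f F F" "\<forall>x\<in>F. \<forall>y\<in>F. \<exists>t. (?f ^^ t) x = y"
    using single_orbit_imp_cycle[of F ?f "strand_cell (0, 0)"] strand_cell_image by auto
  then show ?thesis by (simp add: is_solution_def col_dir_def)
qed

end

theorem corollary5p6:
  fixes m g n k :: int and F :: "(int \<times> int) set"
  assumes "odd m" and "odd g" and "m \<ge> 3" and "g \<ge> 3"
    and "n = m * g" and "k = 1 + (m - 1) * g"
    and "is_array n F" and "cyclically_k_diagonal n k F"
  shows "\<exists>R C. is_solution n F R C"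
proof -
  have "2 * g \<le> (m - 1) * g" using assms(3,4) by (intro mult_right_mono) auto
  then have "2 * g + 1 \<le> k" using assms(6) by simp
  moreover have "odd k" using assms(1,6) by simp
  moreover have "n = k + g - 1" using assms(5,6) by (simp add: algebra_simps)
  ultimately have "diagonal_array n g k F"
    using assms(2,4,8) by unfold_locales simp_all
  then show ?thesis using diagonal_array.is_solution_col_dir by blast
qed

end
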